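(* Let $p,r,\ell\in\mathbb{N}$ with $1<p\leq r+1\leq\ell$, and let $x_1,\dots,x_\ell$ be arbitrary complex numbers. Then \[ \mathfrak{F}\big(\{x_j\}_{j=1}^{r}\big)\,\mathfrak{F}\big(\{x_j\}_{j=p}^{\ell}\big)-\mathfrak{F}\big(\{x_j\}_{j=1}^{\ell}\big)\,\mathfrak{F}\big(\{x_j\}_{j=p}^{r}\big) =\Big(\prod_{j=p-1}^{r}x_jx_{j+1}\Big)\,\mathfrak{F}\big(\{x_j\}_{j=1}^{p-2}\big)\,\mathfrak{F}\big(\{x_j\}_{j=r+2}^{\ell}\big). \] Moreover, if $p,r\in\mathbb{N}$ with $1<p\leq r+1$ and $\{x_j\}_{j=1}^\infty$ is a complex sequence with $\sum_{k=1}^\infty|x_kx_{k+1}|<\infty$, then \[ \mathfrak{F}\big(\{x_j\}_{j=1}^{r}\big)\,\mathfrak{F}\big(\{x_j\}_{j=p}^{\infty}\big)-\mathfrak{F}\big(\{x_j\}_{j=p}^{r}\big)\,\mathfrak{F}\big(\{x_j\}_{j=1}^{\infty}\big) =\Big(\prod_{j=p-1}^{r}x_jx_{j+1}\Big)\,\mathfrak{F}\big(\{x_j\}_{j=1}^{p-2}\big)\,\mathfrak{F}\big(\{x_j\}_{j=r+2}^{\infty}\big). \]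
   Context: For a complex sequence $x=\{x_k\}_{k=N_1}^{N_2}$ with $N_1,N_2\in\mathbb{Z}\cup\{\pm\infty\}$, $N_1\le N_2+1$ (the sequence is empty if $N_1=N_2+1$), satisfying $\sum_{k=N_1}^{N_2-1}|x_kx_{k+1}|<\infty$, define \[ \mathfrak{F}(x)=1+\sum_{m=1}^\infty(-1)^m\sum_{k\in\mathcal{I}(N_1,N_2,m)}x_{k_1}x_{k_1+1}x_{k_2}x_{k_2+1}\cdots x_{k_m}x_{k_m+1}, \] where $\mathcal{I}(N_1,N_2,m)=\{k\in\mathbb{Z}^m:\ k_{j+1}\ge k_j+2\ (1\le j\le m-1),\ N_1\le k_1,\ k_m<N_2\}$. In particular $\mathfrak{F}$ of the empty sequence equals $1$, and for a finite tuple $\mathfrak{F}(x_1,\dots,x_n)$ equals $\mathfrak{F}$ of the sequence $(x_1,\dots,x_n,0,0,\dots)$. Here $\{x_j\}_{j=a}^{b}$ with $b=a-1$ denotes the empty sequence. *)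

theory Defs
  imports "HOL-Analysis.Analysis" "HOL-Library.Extended_Nat"
begin

text \<open>Index set I(N1,N2,m): tuples k = (k_1,...,k_m) (as lists of length m) with
  k_{j+1} \<ge> k_j + 2, N1 \<le> k_1, k_m < N2.  N2 = \<infinity> encodes an infinite sequence.\<close>
definition idxI :: "nat \<Rightarrow> enat \<Rightarrow> nat \<Rightarrow> nat list set" where
  "idxI N1 N2 m = {ks. length ks = m \<and>
      (\<forall>j. Suc j < m \<longrightarrow> ks ! j + 2 \<le> ks ! Suc j) \<and>
      (0 < m \<longrightarrow> N1 \<le> ks ! 0 \<and> enat (ks ! (m - 1)) < N2)}"

text \<open>F of the sequence {x_j}_{j=N1}^{N2}.\<close>
definition frakF :: "(nat \<Rightarrow> complex) \<Rightarrow> nat \<Rightarrow> enat \<Rightarrow> complex" where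
  "frakF x N1 N2 = 1 + (\<Sum>m. (-1) ^ Suc m *
      infsum (\<lambda>ks. \<Prod>j<Suc m. x (ks ! j) * x (ks ! j + 1)) (idxI N1 N2 (Suc m)))"

end

theory Submission
  imports Defs
begin

(*
  Expand \<frak>F as an absolutely convergent sum over finite sets S of pair indices containing no two
  consecutive numbers, each weighted by (-1)^|S| times the product of its pairs x_k x_(k+1).
  Splitting these sets at a fixed pair (r, r+1), according to whether they use it, gives
    \<frak>F(x_N..x_M) = \<frak>F(x_N..x_r) \<frak>F(x_(r+1)..x_M) - x_r x_(r+1) \<frak>F(x_N..x_(r-1)) \<frak>F(x_(r+2)..x_M).
  Applying this to both \<frak>F(x_1..x_M) and \<frak>F(x_p..x_M) reduces the identity to a Casoratian
  identity for the finite continuants \<frak>F(x_1..x_q), \<frak>F(x_p..x_q), which satisfy a three-term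
  recurrence in q and are handled by induction on q.
*)

lemma sorted_wrt_gap_iff:
  "sorted_wrt (\<lambda>a b. a + 2 \<le> b) ks \<longleftrightarrow> sorted_wrt (<) ks \<and> (\<forall>k\<in>set ks. Suc k \<notin> set ks)"
proof
  assume gap: "sorted_wrt (\<lambda>a b. a + 2 \<le> b) ks"
  have "\<not> (i < length ks \<and> j < length ks \<and> ks ! j = Suc (ks ! i))" for i j
    using sorted_wrt_nth_less[OF gap, of i j] sorted_wrt_nth_less[OF gap, of j i]
    by (cases i j rule: linorder_cases) auto
  then show "sorted_wrt (<) ks \<and> (\<forall>k\<in>set ks. Suc k \<notin> set ks)"
    using sorted_wrt_mono_rel[OF _ gap, of "(<)"] by (auto simp: in_set_conv_nth)
next
  assume asm: "sorted_wrt (<) ks \<and> (\<forall>k\<in>set ks. Suc k \<notin> set ks)"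
  show "sorted_wrt (\<lambda>a b. a + 2 \<le> b) ks"
    unfolding sorted_wrt_iff_nth_less
  proof (intro allI impI)
    fix i j assume ij: "i < j" "j < length ks"
    then have "ks ! i < ks ! j" using asm sorted_wrt_nth_less by blast
    moreover have "ks ! j \<noteq> Suc (ks ! i)" using asm ij by (metis nth_mem order.strict_trans)
    ultimately show "ks ! i + 2 \<le> ks ! j" by simp
  qed
qed

lemma prod_set_distinct:
  assumes "distinct ks"
  shows "(\<Prod>k\<in>set ks. f k) = (\<Prod>j<length ks. f (ks ! j))"
proof -
  have "bij_betw (\<lambda>j. ks ! j) {..<length ks} (set ks)"
    using assms by (auto simp: bij_betw_def inj_on_def nth_eq_iff_index_eq in_set_conv_nth)
  then show ?thesis by (rule prod.reindex_bij_betw[symmetric])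
qed

lemma sums_infsum_fibres:
  fixes f :: "'a \<Rightarrow> 'b::banach" and g :: "'a \<Rightarrow> nat"
  assumes "f summable_on A"
  shows "(\<lambda>m. infsum f {a \<in> A. g a = m}) sums infsum f A"
proof -
  define B where "B m = {a \<in> A. g a = m}" for m
  have inj: "inj_on (\<lambda>a. (g a, a)) A" by (simp add: inj_on_def)
  have img: "(\<lambda>a. (g a, a)) ` A = Sigma UNIV B" by (auto simp: B_def image_iff)
  have Sigma_sm: "(\<lambda>(m, a). f a) summable_on Sigma UNIV B"
    using summable_on_reindex[OF inj, of "\<lambda>(m, a). f a"] assms img by (simp add: comp_def)
  then have sm: "(\<lambda>m. infsum f (B m)) summable_on UNIV"
    using summable_on_Sigma_banach by fastforce
  have "infsum (\<lambda>m. infsum f (B m)) UNIV = infsum (\<lambda>(m, a). f a) (Sigma UNIV B)"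
    using infsum_Sigma'_banach[OF Sigma_sm] by simp
  also have "\<dots> = infsum f A"
    using infsum_reindex[OF inj, of "\<lambda>(m, a). f a"] img by (simp add: comp_def)
  finally show ?thesis
    unfolding B_def[symmetric] using has_sum_imp_sums[OF has_sum_infsum[OF sm]] by simp
qed

lemma infsum_product_image:
  fixes f :: "'a \<Rightarrow> 'd::{banach, real_normed_field}"
  assumes inj: "inj_on h (A \<times> B)"
    and f_h: "\<And>a b. a \<in> A \<Longrightarrow> b \<in> B \<Longrightarrow> f (h (a, b)) = c * (g a * g' b)"
    and summable: "f summable_on h ` (A \<times> B)"
  shows "infsum f (h ` (A \<times> B)) = c * (infsum g A * infsum g' B)"
proof -
  let ?G = "\<lambda>(a, b). g a * g' b"
  have "infsum f (h ` (A \<times> B)) = infsum (f \<circ> h) (A \<times> B)"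
    by (rule infsum_reindex[OF inj])
  also have "\<dots> = infsum (\<lambda>p. c * ?G p) (A \<times> B)"
    by (rule infsum_cong) (auto simp: f_h)
  also have "\<dots> = c * infsum ?G (A \<times> B)"
    by (rule infsum_cmult_right')
  also have "\<dots> = c * (infsum g A * infsum g' B)"
  proof (cases "c = 0")
    case False
    have "(f \<circ> h) summable_on A \<times> B"
      using summable_on_reindex[OF inj] summable by blast
    then have "(\<lambda>p. c * ?G p) summable_on A \<times> B"
      by (rule summable_on_cong[THEN iffD1, rotated]) (auto simp: f_h)
    then have "?G summable_on A \<times> B"
      using summable_on_cmult_right'[OF False] by blast
    then have "infsum ?G (A \<times> B) = infsum (\<lambda>a. infsum (\<lambda>b. g a * g' b) B) A"
      using infsum_Sigma'_banach by fastforce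
    also have "\<dots> = infsum g A * infsum g' B"
      by (simp add: infsum_cmult_right' infsum_cmult_left')
    finally show ?thesis by simp
  qed simp
  finally show ?thesis .
qed

text \<open>The sum of \<open>\<Prod>k\<in>S. b k\<close> over all finite \<open>S \<subseteq> {..<L}\<close> is \<open>\<Prod>k<L. 1 + b k \<le> exp (\<Sum>k<L. b k)\<close>.\<close>
lemma prod_summable_on_finite_sets:
  fixes b :: "nat \<Rightarrow> real"
  assumes b_nonneg: "\<And>k. 0 \<le> b k" and "summable b"
  shows "(\<lambda>S. \<Prod>k\<in>S. b k) summable_on {S :: nat set. finite S}"
proof (rule nonneg_bdd_above_summable_on)
  show "bdd_above (sum (\<lambda>S. \<Prod>k\<in>S. b k) ` {F. F \<subseteq> {S. finite S} \<and> finite F})"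
  proof (rule bdd_aboveI2)
    fix F :: "nat set set" assume F: "F \<in> {F. F \<subseteq> {S. finite S} \<and> finite F}"
    have "finite (\<Union>F)" using F by auto
    then obtain L where "\<Union>F \<subseteq> {..<L}" using finite_nat_bounded by blast
    then have sub: "F \<subseteq> Pow {..<L}" by blast
    have "(\<Sum>S\<in>F. \<Prod>k\<in>S. b k) \<le> (\<Sum>S\<in>Pow {..<L}. \<Prod>k\<in>S. b k)"
      by (rule sum_mono2) (use sub b_nonneg in \<open>auto intro: prod_nonneg\<close>)
    also have "\<dots> = (\<Prod>k<L. b k + 1)"
      by (subst prod_add) simp_all
    also have "\<dots> \<le> (\<Prod>k<L. exp (b k))"
      by (rule prod_mono) (use b_nonneg in \<open>auto simp: add.commute\<close>)
    also have "\<dots> = exp (\<Sum>k<L. b k)" by (simp add: exp_sum)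
    also have "\<dots> \<le> exp (suminf b)"
      using sum_le_suminf[OF \<open>summable b\<close>, of "{..<L}"] b_nonneg by simp
    finally show "(\<Sum>S\<in>F. \<Prod>k\<in>S. b k) \<le> exp (suminf b)" .
  qed
qed (simp add: b_nonneg prod_nonneg)

lemma inj_on_union_separated:
  fixes r :: "'a::linorder"
  assumes "C \<subseteq> {r}"
  shows "inj_on (\<lambda>(A, B). C \<union> (A \<union> B)) (Pow {..<r} \<times> Pow {r<..})"
proof (rule inj_onI, clarify)
  fix A B A' B' :: "'a set"
  assume sub: "A \<subseteq> {..<r}" "B \<subseteq> {r<..}" "A' \<subseteq> {..<r}" "B' \<subseteq> {r<..}"
    and eq: "C \<union> (A \<union> B) = C \<union> (A' \<union> B')"
  have "A = (C \<union> (A \<union> B)) \<inter> {..<r}" "B = (C \<union> (A \<union> B)) \<inter> {r<..}"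
       "A' = (C \<union> (A' \<union> B')) \<inter> {..<r}" "B' = (C \<union> (A' \<union> B')) \<inter> {r<..}"
    using sub assms by auto
  then show "A = A' \<and> B = B'" using eq by simp
qed

text \<open>The index tuples \<open>k\<^sub>1 < \<dots> < k\<^sub>m\<close> of \<open>\<frak>F\<close> are the finite sets of pair indices
  without two consecutive elements; those of the sequence \<open>x\<^sub>N, \<dots>, x\<^sub>M\<close> satisfy \<open>N \<le> k < M\<close>.\<close>
definition sparse_sets :: "nat \<Rightarrow> enat \<Rightarrow> nat set set" where
  "sparse_sets N M = {S. finite S \<and> (\<forall>k\<in>S. N \<le> k \<and> enat k < M) \<and> (\<forall>k\<in>S. Suc k \<notin> S)}"

definition sparse_weight :: "(nat \<Rightarrow> complex) \<Rightarrow> nat set \<Rightarrow> complex" where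
  "sparse_weight x S = (-1) ^ card S * (\<Prod>k\<in>S. x k * x (k + 1))"

definition sparse_sum :: "(nat \<Rightarrow> complex) \<Rightarrow> nat \<Rightarrow> enat \<Rightarrow> complex" where
  "sparse_sum x N M = infsum (sparse_weight x) (sparse_sets N M)"

lemma idxI_iff_sorted_gap:
  "ks \<in> idxI N M m \<longleftrightarrow>
     length ks = m \<and> sorted_wrt (\<lambda>a b. a + 2 \<le> b) ks \<and> (\<forall>k\<in>set ks. N \<le> k \<and> enat k < M)"
proof -
  have "transp (\<lambda>a b :: nat. a + 2 \<le> b)" by (auto intro: transpI)
  then have gap_iff: "sorted_wrt (\<lambda>a b. a + 2 \<le> b) ks \<longleftrightarrow>
      (\<forall>j. Suc j < length ks \<longrightarrow> ks ! j + 2 \<le> ks ! Suc j)"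
    by (rule sorted_wrt_iff_nth_Suc_transp)
  have ends_iff: "(N \<le> ks ! 0 \<and> enat (ks ! (length ks - 1)) < M) \<longleftrightarrow> (\<forall>k\<in>set ks. N \<le> k \<and> enat k < M)"
    if "sorted ks" "ks \<noteq> []"
  proof
    assume ends: "N \<le> ks ! 0 \<and> enat (ks ! (length ks - 1)) < M"
    show "\<forall>k\<in>set ks. N \<le> k \<and> enat k < M"
    proof
      fix k assume "k \<in> set ks"
      then obtain i where "i < length ks" "k = ks ! i" by (auto simp: in_set_conv_nth)
      then have "ks ! 0 \<le> k" "k \<le> ks ! (length ks - 1)"
        using sorted_nth_mono[OF \<open>sorted ks\<close>] by auto
      then show "N \<le> k \<and> enat k < M"
        using ends by (meson enat_ord_simps(1) le_trans order_le_less_trans)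
    qed
  qed (use that in auto)
  have sorted: "sorted ks" if "sorted_wrt (\<lambda>a b. a + 2 \<le> b) ks"
    using sorted_wrt_mono_rel[OF _ that, of "(\<le>)"] by simp
  show ?thesis
  proof (cases "ks \<noteq> [] \<and> length ks = m")
    case True
    then have m: "m = length ks" and "0 < length ks" by auto
    then show ?thesis
      unfolding idxI_def mem_Collect_eq m gap_iff[symmetric]
      using ends_iff sorted True by blast
  qed (auto simp: idxI_def)
qed

lemma idxI_iff: "ks \<in> idxI N M m \<longleftrightarrow> length ks = m \<and> sorted_wrt (<) ks \<and> set ks \<in> sparse_sets N M"
  unfolding idxI_iff_sorted_gap sorted_wrt_gap_iff sparse_sets_def by blast

lemma bij_betw_set_idxI: "bij_betw set (idxI N M m) {S \<in> sparse_sets N M. card S = m}"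
proof (rule bij_betw_imageI)
  show "inj_on set (idxI N M m)"
    by (rule inj_onI) (metis idxI_iff strict_sorted_equal)
  show "set ` idxI N M m = {S \<in> sparse_sets N M. card S = m}"
  proof (intro equalityI subsetI)
    fix S assume "S \<in> set ` idxI N M m"
    then show "S \<in> {S \<in> sparse_sets N M. card S = m}"
      by (auto simp: idxI_iff distinct_card strict_sorted_iff)
  next
    fix S assume S: "S \<in> {S \<in> sparse_sets N M. card S = m}"
    then have "finite S" by (simp add: sparse_sets_def)
    then have "sorted_list_of_set S \<in> idxI N M m"
      using S by (simp add: idxI_iff)
    then show "S \<in> set ` idxI N M m"
      using \<open>finite S\<close> by (metis image_eqI set_sorted_list_of_set)
  qed
qed

lemma infsum_sparse_weight_card:
  "infsum (sparse_weight x) {S \<in> sparse_sets N M. card S = m}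
     = (-1) ^ m * infsum (\<lambda>ks. \<Prod>j<m. x (ks ! j) * x (ks ! j + 1)) (idxI N M m)"
proof -
  have "infsum (sparse_weight x) {S \<in> sparse_sets N M. card S = m}
      = infsum (\<lambda>ks. sparse_weight x (set ks)) (idxI N M m)"
    by (rule infsum_reindex_bij_betw[OF bij_betw_set_idxI, symmetric])
  also have "\<dots> = infsum (\<lambda>ks. (-1) ^ m * (\<Prod>j<m. x (ks ! j) * x (ks ! j + 1))) (idxI N M m)"
  proof (rule infsum_cong)
    fix ks assume "ks \<in> idxI N M m"
    then have "distinct ks" "length ks = m" by (auto simp: idxI_iff strict_sorted_iff)
    then show "sparse_weight x (set ks) = (-1) ^ m * (\<Prod>j<m. x (ks ! j) * x (ks ! j + 1))"
      by (simp add: sparse_weight_def distinct_card prod_set_distinct)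
  qed
  finally show ?thesis by (simp add: infsum_cmult_right')
qed

lemma frakF_eq_sparse_sum:
  assumes "sparse_weight x summable_on sparse_sets N M"
  shows "frakF x N M = sparse_sum x N M"
proof -
  define c where "c m = infsum (sparse_weight x) {S \<in> sparse_sets N M. card S = m}" for m
  have c_sums: "c sums sparse_sum x N M"
    unfolding c_def sparse_sum_def by (rule sums_infsum_fibres[OF assms])
  have "{S \<in> sparse_sets N M. card S = 0} = {{}}" by (auto simp: sparse_sets_def)
  then have "c 0 = 1" by (simp add: c_def sparse_weight_def)
  then have "sparse_sum x N M = 1 + (\<Sum>m. c (Suc m))"
    using c_sums suminf_split_head[of c] by (simp add: sums_iff)
  then show ?thesis
    by (simp add: frakF_def c_def infsum_sparse_weight_card)
qed

lemma finite_sparse_sets: "finite (sparse_sets N (enat l))"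
  by (rule finite_subset[of _ "Pow {..<l}"]) (auto simp: sparse_sets_def)

lemma frakF_enat_eq_sparse_sum: "frakF x N (enat l) = sparse_sum x N (enat l)"
  by (simp add: frakF_eq_sparse_sum finite_sparse_sets)

lemma sparse_weight_summable_on:
  assumes "summable (\<lambda>k. norm (x k * x (k + 1)))"
  shows "sparse_weight x summable_on sparse_sets N M"
proof (rule abs_summable_summable)
  have "(\<lambda>S. \<Prod>k\<in>S. norm (x k * x (k + 1))) summable_on {S. finite S}"
    using prod_summable_on_finite_sets[OF _ assms] by simp
  then have "(\<lambda>S. \<Prod>k\<in>S. norm (x k * x (k + 1))) summable_on sparse_sets N M"
    by (rule summable_on_subset) (auto simp: sparse_sets_def)
  moreover have "norm (sparse_weight x S) = (\<Prod>k\<in>S. norm (x k * x (k + 1)))" for S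
    by (simp add: sparse_weight_def norm_mult norm_power prod_norm[symmetric])
  ultimately show "(\<lambda>S. norm (sparse_weight x S)) summable_on sparse_sets N M"
    by simp
qed

lemma sparse_weight_union:
  assumes "finite A" "finite B" "A \<inter> B = {}"
  shows "sparse_weight x (A \<union> B) = sparse_weight x A * sparse_weight x B"
  using assms by (simp add: sparse_weight_def card_Un_disjoint prod.union_disjoint power_add)

lemma sparse_weight_insert:
  assumes "finite S" "r \<notin> S"
  shows "sparse_weight x (insert r S) = - (x r * x (r + 1)) * sparse_weight x S"
  using assms by (simp add: sparse_weight_def)

lemma sparse_sets_split_notin:
  assumes "N \<le> r" "enat r < M"
  shows "{S \<in> sparse_sets N M. r \<notin> S}
           = (\<lambda>(A, B). A \<union> B) ` (sparse_sets N (enat r) \<times> sparse_sets (Suc r) M)"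
proof (intro equalityI subsetI)
  fix S assume S: "S \<in> {S \<in> sparse_sets N M. r \<notin> S}"
  then have "S = {k \<in> S. k < r} \<union> {k \<in> S. r < k}" by (auto simp: le_less not_less)
  moreover have "({k \<in> S. k < r}, {k \<in> S. r < k}) \<in> sparse_sets N (enat r) \<times> sparse_sets (Suc r) M"
    using S by (auto simp: sparse_sets_def)
  ultimately show "S \<in> (\<lambda>(A, B). A \<union> B) ` (sparse_sets N (enat r) \<times> sparse_sets (Suc r) M)"
    by (metis (no_types, lifting) case_prod_conv image_eqI)
next
  fix S assume "S \<in> (\<lambda>(A, B). A \<union> B) ` (sparse_sets N (enat r) \<times> sparse_sets (Suc r) M)"
  then obtain A B where S: "S = A \<union> B" and A: "A \<in> sparse_sets N (enat r)"
    and B: "B \<in> sparse_sets (Suc r) M" by auto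
  have "enat k < M" if "k < r" for k
    using assms(2) that by (meson enat_ord_simps(2) order.strict_trans)
  then show "S \<in> {S \<in> sparse_sets N M. r \<notin> S}"
    using A B assms(1) unfolding S sparse_sets_def by force
qed

lemma sparse_sets_split_in:
  assumes "N \<le> r" "enat r < M"
  shows "{S \<in> sparse_sets N M. r \<in> S}
           = (\<lambda>(A, B). insert r (A \<union> B)) ` (sparse_sets N (enat (r - 1)) \<times> sparse_sets (r + 2) M)"
proof (intro equalityI subsetI)
  fix S assume S: "S \<in> {S \<in> sparse_sets N M. r \<in> S}"
  then have "S = insert r ({k \<in> S. k < r} \<union> {k \<in> S. r < k})" by (auto simp: le_less not_less)
  moreover have "({k \<in> S. k < r}, {k \<in> S. r < k}) \<in> sparse_sets N (enat (r - 1)) \<times> sparse_sets (r + 2) M"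
  proof -
    have "Suc k \<noteq> r" "k \<noteq> Suc r" if "k \<in> S" for k
      using S that by (auto simp: sparse_sets_def)
    then show ?thesis
      using S by (force simp: sparse_sets_def)
  qed
  ultimately show "S \<in> (\<lambda>(A, B). insert r (A \<union> B)) ` (sparse_sets N (enat (r - 1)) \<times> sparse_sets (r + 2) M)"
    by (metis (no_types, lifting) case_prod_conv image_eqI)
next
  fix S assume "S \<in> (\<lambda>(A, B). insert r (A \<union> B)) ` (sparse_sets N (enat (r - 1)) \<times> sparse_sets (r + 2) M)"
  then obtain A B where S: "S = insert r (A \<union> B)" and A: "A \<in> sparse_sets N (enat (r - 1))"
    and B: "B \<in> sparse_sets (r + 2) M" by auto
  have "enat k < M" if "k < r" for k
    using assms(2) that by (meson enat_ord_simps(2) order.strict_trans)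
  then show "S \<in> {S \<in> sparse_sets N M. r \<in> S}"
    using A B assms unfolding S sparse_sets_def by force
qed

lemma sparse_sum_split:
  assumes "N \<le> r" "enat (Suc r) \<le> M" and summable: "sparse_weight x summable_on sparse_sets N M"
  shows "sparse_sum x N M = sparse_sum x N (enat r) * sparse_sum x (Suc r) M
           - x r * x (r + 1) * sparse_sum x N (enat (r - 1)) * sparse_sum x (r + 2) M"
proof -
  have rM: "enat r < M" using assms(2) by (simp add: Suc_ile_eq)
  let ?without = "{S \<in> sparse_sets N M. r \<notin> S}" and ?with = "{S \<in> sparse_sets N M. r \<in> S}"
  have "sparse_sets N (enat r) \<times> sparse_sets (Suc r) M \<subseteq> Pow {..<r} \<times> Pow {r<..}"
    by (auto simp: sparse_sets_def)
  then have inj_without: "inj_on (\<lambda>(A, B). A \<union> B) (sparse_sets N (enat r) \<times> sparse_sets (Suc r) M)"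
    using inj_on_subset[OF inj_on_union_separated[of "{}" r]] by simp
  have "sparse_sets N (enat (r - 1)) \<times> sparse_sets (r + 2) M \<subseteq> Pow {..<r} \<times> Pow {r<..}"
    by (auto simp: sparse_sets_def)
  then have inj_with: "inj_on (\<lambda>(A, B). insert r (A \<union> B)) (sparse_sets N (enat (r - 1)) \<times> sparse_sets (r + 2) M)"
    using inj_on_subset[OF inj_on_union_separated[of "{r}" r]] by simp
  have "infsum (sparse_weight x) ?without = 1 * (sparse_sum x N (enat r) * sparse_sum x (Suc r) M)"
    unfolding sparse_sets_split_notin[OF assms(1) rM] sparse_sum_def
  proof (rule infsum_product_image[OF inj_without])
    fix A B assume "A \<in> sparse_sets N (enat r)" "B \<in> sparse_sets (Suc r) M"
    then have "finite A" "finite B" "A \<inter> B = {}" by (fastforce simp: sparse_sets_def)+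
    then show "sparse_weight x (case (A, B) of (A, B) \<Rightarrow> A \<union> B) = 1 * (sparse_weight x A * sparse_weight x B)"
      by (simp add: sparse_weight_union)
  qed (use summable sparse_sets_split_notin[OF assms(1) rM] in \<open>auto intro: summable_on_subset_banach\<close>)
  moreover have "infsum (sparse_weight x) ?with
      = - (x r * x (r + 1)) * (sparse_sum x N (enat (r - 1)) * sparse_sum x (r + 2) M)"
    unfolding sparse_sets_split_in[OF assms(1) rM] sparse_sum_def
  proof (rule infsum_product_image[OF inj_with])
    fix A B assume "A \<in> sparse_sets N (enat (r - 1))" "B \<in> sparse_sets (r + 2) M"
    then have "finite A" "finite B" "A \<inter> B = {}" "r \<notin> A \<union> B" by (fastforce simp: sparse_sets_def)+
    then show "sparse_weight x (case (A, B) of (A, B) \<Rightarrow> insert r (A \<union> B))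
        = - (x r * x (r + 1)) * (sparse_weight x A * sparse_weight x B)"
      by (simp add: sparse_weight_insert sparse_weight_union)
  qed (use summable sparse_sets_split_in[OF assms(1) rM] in \<open>auto intro: summable_on_subset_banach\<close>)
  moreover have "infsum (sparse_weight x) (?without \<union> ?with)
      = infsum (sparse_weight x) ?without + infsum (sparse_weight x) ?with"
    by (rule infsum_Un_disjoint) (auto intro: summable_on_subset_banach[OF summable])
  moreover have "?without \<union> ?with = sparse_sets N M" by blast
  ultimately show ?thesis by (simp add: sparse_sum_def algebra_simps)
qed

lemma sparse_sum_empty:
  assumes "l \<le> N"
  shows "sparse_sum x N (enat l) = 1"
proof -
  have "sparse_sets N (enat l) = {{}}" using assms by (auto simp: sparse_sets_def)
  then show ?thesis by (simp add: sparse_sum_def sparse_weight_def)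
qed

lemma sparse_sum_finite_split:
  assumes "N \<le> r" "r < l"
  shows "sparse_sum x N (enat l) = sparse_sum x N (enat r) * sparse_sum x (Suc r) (enat l)
           - x r * x (r + 1) * sparse_sum x N (enat (r - 1)) * sparse_sum x (r + 2) (enat l)"
  using assms by (intro sparse_sum_split) (auto simp: finite_sparse_sets)

lemma sparse_sum_Suc_Suc:
  assumes "N \<le> Suc q"
  shows "sparse_sum x N (enat (Suc (Suc q)))
           = sparse_sum x N (enat (Suc q)) - x (Suc q) * x (Suc (Suc q)) * sparse_sum x N (enat q)"
  using sparse_sum_finite_split[of N "Suc q" "Suc (Suc q)" x] assms by (simp add: sparse_sum_empty)

text \<open>The hypothesis \<open>0 < N\<close> prevents \<open>p - 2\<close> from being truncated.\<close>
lemma sparse_sum_casoratian: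
  assumes "0 < N" "N < p" "p - 1 \<le> q"
  shows "sparse_sum x N (enat q) * sparse_sum x p (enat (Suc q))
           - sparse_sum x N (enat (Suc q)) * sparse_sum x p (enat q)
         = (\<Prod>j=p-1..q. x j * x (j + 1)) * sparse_sum x N (enat (p - 2))"
  using assms(3)
proof (induction q rule: dec_induct)
  case base
  have "Suc (Suc (p - 2)) = p" "Suc (p - 2) = p - 1" using assms by auto
  then show ?case
    using sparse_sum_Suc_Suc[of N "p - 2" x] assms by (simp add: sparse_sum_empty)
next
  case (step q)
  let ?F = "sparse_sum x" and ?a = "x (Suc q) * x (Suc (Suc q))"
  have rec: "?F N (enat (Suc (Suc q))) = ?F N (enat (Suc q)) - ?a * ?F N (enat q)"
    "?F p (enat (Suc (Suc q))) = ?F p (enat (Suc q)) - ?a * ?F p (enat q)"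
    using assms step.hyps by (auto intro: sparse_sum_Suc_Suc)
  have "?F N (enat (Suc q)) * ?F p (enat (Suc (Suc q))) - ?F N (enat (Suc (Suc q))) * ?F p (enat (Suc q))
      = ?a * (?F N (enat q) * ?F p (enat (Suc q)) - ?F N (enat (Suc q)) * ?F p (enat q))"
    unfolding rec by (simp add: algebra_simps)
  also have "\<dots> = ?a * (\<Prod>j=p-1..q. x j * x (j + 1)) * ?F N (enat (p - 2))"
    using step.IH by simp
  also have "?a * (\<Prod>j=p-1..q. x j * x (j + 1)) = (\<Prod>j=p-1..Suc q. x j * x (j + 1))"
    using step.hyps by (subst prod.cl_ivl_Suc) auto
  finally show ?case .
qed

lemma sparse_sum_identity:
  assumes "0 < N" "N < p" "p \<le> r + 1" "enat (Suc r) \<le> M"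
    and summable: "sparse_weight x summable_on sparse_sets N M" "sparse_weight x summable_on sparse_sets p M"
  shows "sparse_sum x N (enat r) * sparse_sum x p M - sparse_sum x N M * sparse_sum x p (enat r)
       = (\<Prod>j=p-1..r. x j * x (j + 1)) * sparse_sum x N (enat (p - 2)) * sparse_sum x (r + 2) M"
proof -
  let ?F = "sparse_sum x" and ?a = "x r * x (r + 1)"
  have split_N: "?F N M = ?F N (enat r) * ?F (Suc r) M - ?a * ?F N (enat (r - 1)) * ?F (r + 2) M"
    using assms by (intro sparse_sum_split) auto
  show ?thesis
  proof (cases "p = r + 1")
    case True
    then have "?F p (enat r) = 1" "p - 2 = r - 1" by (auto simp: sparse_sum_empty)
    then show ?thesis
      using True split_N by (simp add: algebra_simps)
  next
    case False
    then have "p \<le> r" "0 < r" using assms by auto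
    have split_p: "?F p M = ?F p (enat r) * ?F (Suc r) M - ?a * ?F p (enat (r - 1)) * ?F (r + 2) M"
      using \<open>p \<le> r\<close> assms by (intro sparse_sum_split) auto
    have "?F N (enat r) * ?F p M - ?F N M * ?F p (enat r)
        = ?a * (?F N (enat (r - 1)) * ?F p (enat (Suc (r - 1))) - ?F N (enat (Suc (r - 1))) * ?F p (enat (r - 1)))
            * ?F (r + 2) M"
      unfolding split_N split_p using \<open>0 < r\<close> by (simp add: algebra_simps)
    also have "\<dots> = ?a * (\<Prod>j=p-1..r-1. x j * x (j + 1)) * ?F N (enat (p - 2)) * ?F (r + 2) M"
      using sparse_sum_casoratian[of N p "r - 1" x] assms \<open>p \<le> r\<close> by simp
    also have "?a * (\<Prod>j=p-1..r-1. x j * x (j + 1)) = (\<Prod>j=p-1..r. x j * x (j + 1))"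
    proof -
      have "(\<Prod>j=p-1..Suc (r - 1). x j * x (j + 1)) = (\<Prod>j=p-1..r-1. x j * x (j + 1)) * ?a"
        using \<open>p \<le> r\<close> \<open>0 < r\<close> by (subst prod.cl_ivl_Suc) auto
      then show ?thesis using \<open>0 < r\<close> by (simp add: mult.commute)
    qed
    finally show ?thesis by (simp add: mult.assoc)
  qed
qed

theorem mainTheorem1:
  fixes x :: "nat \<Rightarrow> complex" and p r :: nat
  assumes "1 < p" and "p \<le> r + 1"
  shows "(\<forall>l::nat. r + 1 \<le> l \<longrightarrow>
           frakF x 1 (enat r) * frakF x p (enat l) - frakF x 1 (enat l) * frakF x p (enat r)
           = (\<Prod>j=p-1..r. x j * x (j + 1)) * frakF x 1 (enat (p - 2)) * frakF x (r + 2) (enat l))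
       \<and> (summable (\<lambda>k. norm (x k * x (k + 1))) \<longrightarrow>
           frakF x 1 (enat r) * frakF x p \<infinity> - frakF x p (enat r) * frakF x 1 \<infinity>
           = (\<Prod>j=p-1..r. x j * x (j + 1)) * frakF x 1 (enat (p - 2)) * frakF x (r + 2) \<infinity>)"
proof (intro conjI allI impI)
  fix l :: nat assume "r + 1 \<le> l"
  then show "frakF x 1 (enat r) * frakF x p (enat l) - frakF x 1 (enat l) * frakF x p (enat r)
           = (\<Prod>j=p-1..r. x j * x (j + 1)) * frakF x 1 (enat (p - 2)) * frakF x (r + 2) (enat l)"
    using sparse_sum_identity[of 1 p r "enat l" x] assms
    by (simp add: frakF_enat_eq_sparse_sum finite_sparse_sets)
next
  assume "summable (\<lambda>k. norm (x k * x (k + 1)))"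
  then have summable: "sparse_weight x summable_on sparse_sets N M" for N M
    by (rule sparse_weight_summable_on)
  then have "frakF x N M = sparse_sum x N M" for N M
    by (rule frakF_eq_sparse_sum)
  then show "frakF x 1 (enat r) * frakF x p \<infinity> - frakF x p (enat r) * frakF x 1 \<infinity>
           = (\<Prod>j=p-1..r. x j * x (j + 1)) * frakF x 1 (enat (p - 2)) * frakF x (r + 2) \<infinity>"
    using sparse_sum_identity[of 1 p r \<infinity> x] assms summable by (simp add: mult.commute)
qed

end
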